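(* Let $\pi$ be uniformly distributed on $\mathrm{PF}_n$ and let $X$ be a Borel random variable, $P(X=m)=e^{-m}m^{m-1}/m!$ for $m=1,2,\dots$. For each fixed integer $j\ge 0$, $$P(\pi_1=n-j)\sim\frac{P(X\le j+1)}{n}\qquad(n\to\infty).$$ In particular $P(\pi_1=n)\sim 1/(en)$.
   Context: A parking function of length $n$ is a sequence $(\pi_1,\dots,\pi_n)$ with $1\le\pi_i\le n$ such that $\#\{t:\pi_t\le i\}\ge i$ for all $1\le i\le n$; $\mathrm{PF}_n$ denotes the set of these. $a_n\sim b_n$ means $a_n/b_n\to1$. *)

theory Defs
  imports "HOL-Analysis.Analysis" "HOL-Library.Landau_Symbols"
begin

text \<open>Parking functions of length n, as lists (pi_1,...,pi_n) = (p!0,...,p!(n-1)).\<close>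
definition PF :: "nat \<Rightarrow> nat list set" where
  "PF n = {p. length p = n \<and> (\<forall>t<n. 1 \<le> p ! t \<and> p ! t \<le> n) \<and>
              (\<forall>i\<in>{1..n}. i \<le> card {t. t < n \<and> p ! t \<le> i})}"

definition prob_first :: "nat \<Rightarrow> nat \<Rightarrow> real" where
  "prob_first n k = real (card {p \<in> PF n. p ! 0 = k}) / real (card (PF n))"

definition borel_pmf :: "nat \<Rightarrow> real" where
  "borel_pmf m = (if m \<ge> 1 then exp (- real m) * real m ^ (m - 1) / fact m else 0)"

definition borel_cdf :: "nat \<Rightarrow> real" where
  "borel_cdf j = (\<Sum>m=1..j. borel_pmf m)"

end

theory Submission
  imports Defs "HOL-Real_Asymp.Real_Asymp"
begin

text \<open>
  By Pollak's argument, exactly one of the \<open>n + 1\<close> cyclic rotations of a preference sequence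
  in \<open>{0..n}^n\<close> is a parking function: rotate so that the walk ``cars preferring the first \<open>i\<close>
  spots, minus \<open>i\<close>'' starts at its first minimum. Hence \<open>|PF n| = (n + 1)^(n - 1)\<close>.

  Lowering \<open>\<pi>\<^sub>1\<close> from \<open>k + 1\<close> to \<open>k\<close> keeps a parking function parking, and every parking function
  with \<open>\<pi>\<^sub>1 = k\<close> arises in this way unless exactly \<open>k\<close> cars prefer spots \<open>\<le> k\<close> (a breakpoint at \<open>k\<close>).
  So \<open>#{\<pi>\<^sub>1 = k}\<close> is the sum over \<open>k' \<ge> k\<close> of \<open>#{\<pi>\<^sub>1 = k', breakpoint at k'}\<close>. Such a
  parking function consists of a parking function of the \<open>k'\<close> cars preferring spots \<open>\<le> k'\<close>, in
  which car 1 prefers the last spot and is irrelevant, and a parking function of the other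
  \<open>n - k'\<close> cars on the spots after \<open>k'\<close>; there are \<open>C(n-1, k'-1) k'^(k'-2) (n-k'+1)^(n-k'-1)\<close> of
  them. With \<open>m = n + 1 - k'\<close>, \<open>n / (n + 1)^(n - 1)\<close> times this count tends to \<open>e^(-m) m^(m-1) / m!\<close>.
\<close>

lemma card_filter_bij_betw:
  assumes "bij_betw f A B" and "\<And>x. x \<in> A \<Longrightarrow> P x \<longleftrightarrow> Q (f x)"
  shows "card {x\<in>A. P x} = card {y\<in>B. Q y}"
proof -
  have "bij_betw f {x\<in>A. P x} {y\<in>B. Q y}"
    by (rule bij_betw_subset[OF assms(1)]) (use assms in \<open>auto simp: bij_betw_def\<close>)
  then show ?thesis by (rule bij_betw_same_card)
qed

lemma ball_of_card_filter_ge: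
  assumes "finite I" "card I \<le> card {t\<in>I. P t}"
  shows "\<forall>t\<in>I. P t"
proof -
  have "{t\<in>I. P t} = I" using assms by (intro card_seteq) auto
  then show ?thesis by blast
qed

lemma ball_atLeastAtMost_add_iff:
  fixes a b :: nat
  shows "(\<forall>i\<in>{1..a + b}. P i) \<longleftrightarrow> (\<forall>i\<in>{1..a}. P i) \<and> (\<forall>i\<in>{1..b}. P (a + i))"
proof
  assume H: "(\<forall>i\<in>{1..a}. P i) \<and> (\<forall>i\<in>{1..b}. P (a + i))"
  show "\<forall>i\<in>{1..a + b}. P i"
  proof
    fix i assume i: "i \<in> {1..a + b}"
    show "P i"
    proof (cases "i \<le> a")
      case False
      with i have "i - a \<in> {1..b}" "a + (i - a) = i" by auto
      with H show ?thesis by metis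
    qed (use H i in auto)
  qed
qed auto

lemma card_filter_remove:
  assumes "finite A" "x \<in> A"
  shows "card {t\<in>A. P t} = card {t\<in>A - {x}. P t} + (if P x then 1 else 0)"
proof -
  have "{t\<in>A. P t} = (if P x then insert x {t\<in>A - {x}. P t} else {t\<in>A - {x}. P t})"
    using assms(2) by auto
  then show ?thesis using assms(1) by simp
qed

lemma card_less_eq_sum_card_eq:
  fixes f :: "'a \<Rightarrow> nat"
  assumes "finite A"
  shows "card {t\<in>A. f t < i} = (\<Sum>w<i. card {t\<in>A. f t = w})"
proof (induction i)
  case (Suc i)
  have "{t\<in>A. f t < Suc i} = {t\<in>A. f t < i} \<union> {t\<in>A. f t = i}" by auto
  moreover have "card ({t\<in>A. f t < i} \<union> {t\<in>A. f t = i}) = card {t\<in>A. f t < i} + card {t\<in>A. f t = i}"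
    by (rule card_Un_disjoint) (use assms in auto)
  ultimately show ?case using Suc by simp
qed simp

lemma sum_lessThan_add: "(\<Sum>v<r + i. g v) = (\<Sum>v<r. g v) + (\<Sum>w<i. g (w + r))"
  for g :: "nat \<Rightarrow> 'a::comm_monoid_add"
  by (induction i) (simp_all add: add.commute add.left_commute)

lemma sum_card_filter_swap:
  assumes "finite A" "finite B"
  shows "(\<Sum>a\<in>A. card {b\<in>B. P a b}) = (\<Sum>b\<in>B. card {a\<in>A. P a b})"
proof -
  have card_eq: "card {x\<in>X. Q x} = (\<Sum>x\<in>X. if Q x then 1 else 0)" if "finite X" for X and Q :: "'c \<Rightarrow> bool"
    using that by (simp add: sum.inter_filter[symmetric])
  have "(\<Sum>a\<in>A. card {b\<in>B. P a b}) = (\<Sum>a\<in>A. \<Sum>b\<in>B. if P a b then 1 else 0)"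
    using assms by (simp add: card_eq)
  also have "\<dots> = (\<Sum>b\<in>B. \<Sum>a\<in>A. if P a b then 1 else 0)"
    by (rule sum.swap)
  also have "\<dots> = (\<Sum>b\<in>B. card {a\<in>A. P a b})"
    using assms by (simp add: card_eq)
  finally show ?thesis .
qed

lemma card_subsets_containing:
  assumes "finite A" "a \<in> A"
  shows "card {T. T \<subseteq> A \<and> a \<in> T \<and> card T = Suc k} = (card A - 1) choose k"
proof -
  have "{T. T \<subseteq> A \<and> a \<in> T \<and> card T = Suc k} = insert a ` {S. S \<subseteq> A - {a} \<and> card S = k}"
  proof (intro equalityI subsetI)
    fix T assume T: "T \<in> {T. T \<subseteq> A \<and> a \<in> T \<and> card T = Suc k}"
    then have "finite T" using finite_subset[of T A] assms(1) by blast
    with T have "T - {a} \<in> {S. S \<subseteq> A - {a} \<and> card S = k}" by auto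
    moreover have "T = insert a (T - {a})" using T by auto
    ultimately show "T \<in> insert a ` {S. S \<subseteq> A - {a} \<and> card S = k}" by (rule rev_image_eqI)
  next
    fix T assume "T \<in> insert a ` {S. S \<subseteq> A - {a} \<and> card S = k}"
    then obtain S where S: "S \<subseteq> A - {a}" "card S = k" and T: "T = insert a S" by blast
    moreover have "finite S" "a \<notin> S" using S(1) assms(1) finite_subset[of S A] by blast+
    ultimately show "T \<in> {T. T \<subseteq> A \<and> a \<in> T \<and> card T = Suc k}" using assms(2) by auto
  qed
  moreover have "inj_on (insert a) {S. S \<subseteq> A - {a} \<and> card S = k}"
  proof (rule inj_onI)
    fix S S' assume "S \<in> {S. S \<subseteq> A - {a} \<and> card S = k}" "S' \<in> {S. S \<subseteq> A - {a} \<and> card S = k}"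
      and "insert a S = insert a S'"
    then have "insert a S - {a} = insert a S' - {a}" "a \<notin> S" "a \<notin> S'" by auto
    then show "S = S'" by simp
  qed
  ultimately show ?thesis
    using n_subsets[of "A - {a}" k] assms by (simp add: card_image)
qed

lemma bij_betw_restrict_fun_upd:
  assumes "c \<notin> T" "v \<in> B"
  shows "bij_betw (\<lambda>x. restrict x T) {x \<in> insert c T \<rightarrow>\<^sub>E B. x c = v} (T \<rightarrow>\<^sub>E B)"
proof (rule bij_betwI[where g = "\<lambda>y. y(c := v)"])
  show "(\<lambda>x. restrict x T) \<in> {x \<in> insert c T \<rightarrow>\<^sub>E B. x c = v} \<rightarrow> (T \<rightarrow>\<^sub>E B)"
  proof
    fix x assume "x \<in> {x \<in> insert c T \<rightarrow>\<^sub>E B. x c = v}"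
    then have "x \<in> insert c T \<rightarrow>\<^sub>E B" by simp
    from PiE_mem[OF this] show "restrict x T \<in> T \<rightarrow>\<^sub>E B" by (simp add: restrict_PiE_iff)
  qed
  show "(\<lambda>y. y(c := v)) \<in> (T \<rightarrow>\<^sub>E B) \<rightarrow> {x \<in> insert c T \<rightarrow>\<^sub>E B. x c = v}"
    using PiE_fun_upd[of v "\<lambda>_. B" c] assms(2) by auto
  show "(restrict x T)(c := v) = x" if "x \<in> {x \<in> insert c T \<rightarrow>\<^sub>E B. x c = v}" for x
  proof
    fix t show "((restrict x T)(c := v)) t = x t"
      using that PiE_arb[of x "insert c T" "\<lambda>_. B" t] by (cases "t \<in> T") auto
  qed
  show "restrict (y(c := v)) T = y" if "y \<in> T \<rightarrow>\<^sub>E B" for y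
  proof
    fix t show "restrict (y(c := v)) T t = y t"
      using PiE_arb[OF that, of t] assms(1) by (cases "t \<in> T") auto
  qed
qed

lemma mod_add_diff_eq_iff:
  fixes x r w N :: nat
  assumes "x < N" "r < N" "w < N"
  shows "(x + N - r) mod N = w \<longleftrightarrow> x = (w + r) mod N"
  using assms by (cases "r \<le> x") (auto simp: mod_if)

section \<open>Parking functions on an arbitrary set of cars\<close>

text \<open>Preferences of the cars \<open>I\<close> for the spots \<open>off+1, ..., off+m\<close>. A list \<open>p \<in> PF n\<close>
  corresponds to the function \<open>t \<mapsto> p ! t\<close> in \<open>parking_funs n\<close>.\<close>

definition parking_fun_on :: "'a set \<Rightarrow> nat \<Rightarrow> nat \<Rightarrow> ('a \<Rightarrow> nat) set" where
  "parking_fun_on I off m =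
     {g \<in> I \<rightarrow>\<^sub>E {off+1..off+m}. \<forall>i\<in>{1..m}. i \<le> card {t\<in>I. g t \<le> off + i}}"

abbreviation parking_funs :: "nat \<Rightarrow> (nat \<Rightarrow> nat) set" where
  "parking_funs n \<equiv> parking_fun_on {..<n} 0 n"

lemma parking_fun_on_subset_PiE: "parking_fun_on I off m \<subseteq> I \<rightarrow>\<^sub>E {off+1..off+m}"
  unfolding parking_fun_on_def by (rule Collect_restrict)

lemma finite_parking_fun_on: "finite I \<Longrightarrow> finite (parking_fun_on I off m)"
  by (rule finite_subset[OF parking_fun_on_subset_PiE]) (simp add: finite_PiE)

lemma restrict_in_parking_fun_on_iff:
  "restrict g I \<in> parking_fun_on I off m \<longleftrightarrow>
     (\<forall>t\<in>I. g t \<in> {off+1..off+m}) \<and> (\<forall>i\<in>{1..m}. i \<le> card {t\<in>I. g t \<le> off + i})"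
proof -
  have "{t\<in>I. restrict g I t \<le> off + i} = {t\<in>I. g t \<le> off + i}" for i by auto
  then show ?thesis by (simp add: parking_fun_on_def restrict_PiE_iff Pi_iff)
qed

lemma parking_fun_on_compose_bij:
  assumes \<rho>: "bij_betw \<rho> J I" and g: "g \<in> parking_fun_on I off m"
  shows "(\<lambda>u\<in>J. g (\<rho> u)) \<in> parking_fun_on J off m"
proof -
  have "card {u\<in>J. g (\<rho> u) \<le> off + i} = card {t\<in>I. g t \<le> off + i}" for i
    by (rule card_filter_bij_betw[OF \<rho>]) simp
  moreover have "\<rho> u \<in> I" if "u \<in> J" for u using \<rho> that by (auto simp: bij_betw_def)
  ultimately show ?thesis
    using g unfolding restrict_in_parking_fun_on_iff by (auto simp: parking_fun_on_def)
qed

lemma card_parking_fun_on_reindex: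
  assumes \<sigma>: "bij_betw \<sigma> J I"
  shows "card (parking_fun_on I off m) = card (parking_fun_on J off m)"
proof -
  define \<tau> where "\<tau> = the_inv_into J \<sigma>"
  have \<tau>: "bij_betw \<tau> I J" unfolding \<tau>_def by (rule bij_betw_the_inv_into[OF \<sigma>])
  have \<sigma>\<tau>: "t \<in> I \<Longrightarrow> \<sigma> (\<tau> t) = t" and \<tau>\<sigma>: "u \<in> J \<Longrightarrow> \<tau> (\<sigma> u) = u" for t u
    using \<sigma> unfolding \<tau>_def by (auto simp: bij_betw_def f_the_inv_into_f the_inv_into_f_f)
  have "bij_betw (\<lambda>g. \<lambda>u\<in>J. g (\<sigma> u)) (parking_fun_on I off m) (parking_fun_on J off m)"
  proof (rule bij_betwI[where g = "\<lambda>g. \<lambda>t\<in>I. g (\<tau> t)"])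
    show "(\<lambda>g. \<lambda>u\<in>J. g (\<sigma> u)) \<in> parking_fun_on I off m \<rightarrow> parking_fun_on J off m"
      using parking_fun_on_compose_bij[OF \<sigma>] by blast
    show "(\<lambda>g. \<lambda>t\<in>I. g (\<tau> t)) \<in> parking_fun_on J off m \<rightarrow> parking_fun_on I off m"
      using parking_fun_on_compose_bij[OF \<tau>] by blast
    show "(\<lambda>t\<in>I. (\<lambda>u\<in>J. g (\<sigma> u)) (\<tau> t)) = g" if "g \<in> parking_fun_on I off m" for g
      using that \<tau> \<sigma>\<tau> by (auto simp: parking_fun_on_def PiE_def extensional_def bij_betw_def)
    show "(\<lambda>u\<in>J. (\<lambda>t\<in>I. g (\<tau> t)) (\<sigma> u)) = g" if "g \<in> parking_fun_on J off m" for g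
      using that \<sigma> \<tau>\<sigma> by (auto simp: parking_fun_on_def PiE_def extensional_def bij_betw_def)
  qed
  then show ?thesis by (rule bij_betw_same_card)
qed

lemma card_parking_fun_on_shift:
  "card (parking_fun_on I off m) = card (parking_fun_on I 0 m)"
proof -
  have "bij_betw (\<lambda>g. \<lambda>t\<in>I. g t - off) (parking_fun_on I off m) (parking_fun_on I 0 m)"
  proof (rule bij_betwI[where g = "\<lambda>g. \<lambda>t\<in>I. g t + off"])
    show "(\<lambda>g. \<lambda>t\<in>I. g t - off) \<in> parking_fun_on I off m \<rightarrow> parking_fun_on I 0 m"
    proof
      fix g assume g: "g \<in> parking_fun_on I off m"
      then have "{t\<in>I. (\<lambda>t\<in>I. g t - off) t \<le> 0 + i} = {t\<in>I. g t \<le> off + i}" for i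
        by (force simp: parking_fun_on_def)
      with g show "(\<lambda>t\<in>I. g t - off) \<in> parking_fun_on I 0 m"
        by (force simp: parking_fun_on_def)
    qed
    show "(\<lambda>g. \<lambda>t\<in>I. g t + off) \<in> parking_fun_on I 0 m \<rightarrow> parking_fun_on I off m"
    proof
      fix g assume g: "g \<in> parking_fun_on I 0 m"
      then have "{t\<in>I. (\<lambda>t\<in>I. g t + off) t \<le> off + i} = {t\<in>I. g t \<le> 0 + i}" for i
        by auto
      with g show "(\<lambda>t\<in>I. g t + off) \<in> parking_fun_on I off m"
        by (force simp: parking_fun_on_def)
    qed
  qed (force simp: parking_fun_on_def PiE_def extensional_def fun_eq_iff)+
  then show ?thesis by (rule bij_betw_same_card)
qed

section \<open>Pollak's cycle argument\<close>

lemma rotation_minimum_unique: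
  fixes F :: "nat \<Rightarrow> int"
  assumes per: "\<And>i. F (N + i) = F i - 1" and "a < b" "b < N"
    and min_a: "\<forall>i\<in>{1..<N}. F a \<le> F (a + i)" and min_b: "\<forall>i\<in>{1..<N}. F b \<le> F (b + i)"
  shows False
proof -
  have "b - a \<in> {1..<N}" "a + N - b \<in> {1..<N}" using assms by auto
  with min_a min_b have "F a \<le> F (a + (b - a))" "F b \<le> F (b + (a + N - b))" by blast+
  moreover have "a + (b - a) = b" "b + (a + N - b) = N + a" using assms by auto
  ultimately show False using per[of a] by simp
qed

lemma ex_rotation_minimum:
  fixes F :: "nat \<Rightarrow> int"
  assumes "1 \<le> N" and per: "\<And>i. F (N + i) = F i - 1"
  shows "\<exists>r<N. \<forall>i\<in>{1..<N}. F r \<le> F (r + i)"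
proof -
  txt \<open>The first position at which \<open>F\<close> attains its minimum on \<open>{..<N}\<close> works.\<close>
  define M where "M = Min (F ` {..<N})"
  have M_le: "q < N \<Longrightarrow> M \<le> F q" for q unfolding M_def by simp
  have "M \<in> F ` {..<N}" unfolding M_def using assms by (intro Min_in) (auto simp: lessThan_empty_iff)
  then have ex: "\<exists>q. q < N \<and> F q = M" by auto
  define r where "r = (LEAST q. q < N \<and> F q = M)"
  have r: "r < N" "F r = M" using LeastI_ex[OF ex] unfolding r_def by auto
  have before_r: "M < F q" if "q < r" for q
  proof -
    have "q < N" "\<not> (q < N \<and> F q = M)"
      using not_less_Least[of q "\<lambda>q. q < N \<and> F q = M"] that r unfolding r_def[symmetric] by auto
    then show ?thesis using M_le[of q] by simp
  qed
  have "F r \<le> F (r + i)" if i: "i \<in> {1..<N}" for i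
  proof (cases "r + i < N")
    case True then show ?thesis using r M_le by simp
  next
    case False
    then have "r + i = N + (r + i - N)" "r + i - N < r" using i r by auto
    then show ?thesis using before_r[of "r + i - N"] per[of "r + i - N"] r by simp
  qed
  with r(1) show ?thesis by blast
qed

lemma ex1_rotation_minimum:
  fixes F :: "nat \<Rightarrow> int"
  assumes "1 \<le> N" and per: "\<And>i. F (N + i) = F i - 1"
  shows "\<exists>!r. r < N \<and> (\<forall>i\<in>{1..<N}. F r \<le> F (r + i))"
proof -
  obtain r where r: "r < N" "\<forall>i\<in>{1..<N}. F r \<le> F (r + i)"
    using ex_rotation_minimum[of N F] assms by blast
  show ?thesis
  proof (rule ex1I[of _ r])
    show "r' = r" if "r' < N \<and> (\<forall>i\<in>{1..<N}. F r' \<le> F (r' + i))" for r'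
      using rotation_minimum_unique[of F N r r'] rotation_minimum_unique[of F N r' r] per that r
      by (cases r r' rule: linorder_cases) auto
  qed (use r in simp)
qed

text \<open>Preferences \<open>s\<close> in \<open>{0..n}\<close>, read as spots on a circular street with \<open>n + 1\<close> spots,
  all rotated back by \<open>r\<close> and then renumbered \<open>1..n+1\<close>.\<close>

definition cyclic_shift :: "nat \<Rightarrow> nat \<Rightarrow> (nat \<Rightarrow> nat) \<Rightarrow> nat \<Rightarrow> nat" where
  "cyclic_shift n r s = (\<lambda>t\<in>{..<n}. (s t + Suc n - r) mod Suc n + 1)"

text \<open>\<open>excess n s i\<close> counts the cars of \<open>s\<close> preferring one of the first \<open>i\<close> spots of the
  circular street, traversed repeatedly, minus \<open>i\<close>.\<close>

definition excess :: "nat \<Rightarrow> (nat \<Rightarrow> nat) \<Rightarrow> nat \<Rightarrow> int" where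
  "excess n s i = (\<Sum>v<i. int (card {t\<in>{..<n}. s t = v mod Suc n}) - 1)"

lemma bij_betw_cyclic_shift:
  assumes "r \<le> n"
  shows "bij_betw (cyclic_shift n r) ({..<n} \<rightarrow>\<^sub>E {..n}) ({..<n} \<rightarrow>\<^sub>E {1..Suc n})"
proof (rule bij_betwI[where g = "\<lambda>g. \<lambda>t\<in>{..<n}. (g t + r - 1) mod Suc n"])
  have inv1: "((x + Suc n - r) mod Suc n + 1 + r - 1) mod Suc n = x" if "x \<le> n" for x
    using mod_add_diff_eq_iff[of x "Suc n" r "(x + Suc n - r) mod Suc n"] that assms by simp
  have inv2: "((y + r - 1) mod Suc n + Suc n - r) mod Suc n + 1 = y" if "y \<in> {1..Suc n}" for y
    using mod_add_diff_eq_iff[of "(y + r - 1) mod Suc n" "Suc n" r "y - 1"] that assms by auto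
  show "cyclic_shift n r \<in> ({..<n} \<rightarrow>\<^sub>E {..n}) \<rightarrow> ({..<n} \<rightarrow>\<^sub>E {1..Suc n})"
    by (auto simp: cyclic_shift_def)
  show "(\<lambda>g. \<lambda>t\<in>{..<n}. (g t + r - 1) mod Suc n) \<in> ({..<n} \<rightarrow>\<^sub>E {1..Suc n}) \<rightarrow> ({..<n} \<rightarrow>\<^sub>E {..n})"
    by (auto simp: mod_Suc_le_divisor)
  show "(\<lambda>t\<in>{..<n}. (cyclic_shift n r s t + r - 1) mod Suc n) = s" if s: "s \<in> {..<n} \<rightarrow>\<^sub>E {..n}" for s
  proof
    fix t show "(\<lambda>t\<in>{..<n}. (cyclic_shift n r s t + r - 1) mod Suc n) t = s t"
    proof (cases "t < n")
      case True
      then have "s t \<le> n" using PiE_mem[OF s, of t] by simp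
      from inv1[OF this] True show ?thesis
        unfolding cyclic_shift_def by simp
    qed (use s in \<open>simp add: PiE_def extensional_def\<close>)
  qed
  show "cyclic_shift n r (\<lambda>t\<in>{..<n}. (g t + r - 1) mod Suc n) = g" if g: "g \<in> {..<n} \<rightarrow>\<^sub>E {1..Suc n}" for g
  proof
    fix t show "cyclic_shift n r (\<lambda>t\<in>{..<n}. (g t + r - 1) mod Suc n) t = g t"
    proof (cases "t < n")
      case True
      then have "g t \<in> {1..Suc n}" using PiE_mem[OF g, of t] by simp
      from inv2[OF this] True show ?thesis
        unfolding cyclic_shift_def by simp
    qed (use g in \<open>simp add: cyclic_shift_def PiE_def extensional_def\<close>)
  qed
qed

lemma parking_funs_iff_counts:
  assumes "h \<in> {..<n} \<rightarrow>\<^sub>E {1..Suc n}"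
  shows "h \<in> parking_funs n \<longleftrightarrow> (\<forall>i\<in>{1..n}. i \<le> card {t\<in>{..<n}. h t \<le> i})"
proof
  assume counts: "\<forall>i\<in>{1..n}. i \<le> card {t\<in>{..<n}. h t \<le> i}"
  have "\<forall>t\<in>{..<n}. h t \<le> n"
  proof (cases "n = 0")
    case False
    then show ?thesis using counts by (intro ball_of_card_filter_ge) auto
  qed simp
  then have "h \<in> {..<n} \<rightarrow>\<^sub>E {1..n}"
    using PiE_mem[OF assms] PiE_arb[OF assms] by (auto intro!: PiE_I)
  with counts show "h \<in> parking_funs n"
    by (simp add: parking_fun_on_def)
qed (simp add: parking_fun_on_def)

lemma cyclic_shift_parking_iff:
  assumes s: "s \<in> {..<n} \<rightarrow>\<^sub>E {..n}" and r: "r \<le> n"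
  shows "cyclic_shift n r s \<in> parking_funs n \<longleftrightarrow> (\<forall>i\<in>{1..n}. excess n s r \<le> excess n s (r + i))"
proof -
  define a where "a = (\<lambda>v. card {t\<in>{..<n}. s t = v})"
  have count: "card {t\<in>{..<n}. cyclic_shift n r s t \<le> i} = (\<Sum>w<i. a ((w + r) mod Suc n))"
    if "i \<le> n" for i
  proof -
    have "{t\<in>{..<n}. cyclic_shift n r s t \<le> i} = {t\<in>{..<n}. (s t + Suc n - r) mod Suc n < i}"
      by (auto simp: cyclic_shift_def)
    then have "card {t\<in>{..<n}. cyclic_shift n r s t \<le> i}
               = (\<Sum>w<i. card {t\<in>{..<n}. (s t + Suc n - r) mod Suc n = w})"
      using card_less_eq_sum_card_eq[of "{..<n}" "\<lambda>t. (s t + Suc n - r) mod Suc n" i] by simp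
    also have "\<dots> = (\<Sum>w<i. a ((w + r) mod Suc n))"
    proof (rule sum.cong[OF refl])
      fix w assume "w \<in> {..<i}"
      then have w: "w < Suc n" using that by simp
      have "(s t + Suc n - r) mod Suc n = w \<longleftrightarrow> s t = (w + r) mod Suc n" if "t < n" for t
        using mod_add_diff_eq_iff[OF _ _ w, of "s t" r] PiE_mem[OF s, of t] that r by simp
      then have "{t\<in>{..<n}. (s t + Suc n - r) mod Suc n = w} = {t\<in>{..<n}. s t = (w + r) mod Suc n}"
        by blast
      then show "card {t\<in>{..<n}. (s t + Suc n - r) mod Suc n = w} = a ((w + r) mod Suc n)"
        unfolding a_def by simp
    qed
    finally show ?thesis .
  qed
  have increment: "excess n s (r + i) - excess n s r = int (\<Sum>w<i. a ((w + r) mod Suc n)) - int i" for i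
    unfolding excess_def a_def by (simp add: sum_lessThan_add sum_subtractf)
  have "i \<le> card {t\<in>{..<n}. cyclic_shift n r s t \<le> i} \<longleftrightarrow> excess n s r \<le> excess n s (r + i)"
    if "i \<le> n" for i
    using count[OF that] increment[of i] by linarith
  moreover have "cyclic_shift n r s \<in> {..<n} \<rightarrow>\<^sub>E {1..Suc n}"
    using bij_betw_cyclic_shift[OF r] s unfolding bij_betw_def by blast
  ultimately show ?thesis by (simp add: parking_funs_iff_counts)
qed

lemma excess_periodic:
  assumes s: "s \<in> {..<n} \<rightarrow>\<^sub>E {..n}"
  shows "excess n s (Suc n + i) = excess n s i - 1"
proof -
  have "(\<Sum>v<Suc n. card {t\<in>{..<n}. s t = v}) = card {t\<in>{..<n}. s t < Suc n}"
    by (rule card_less_eq_sum_card_eq[symmetric]) simp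
  also have "{t\<in>{..<n}. s t < Suc n} = {..<n}"
    using PiE_mem[OF s] by (auto simp: less_Suc_eq_le)
  finally have "(\<Sum>v<Suc n. card {t\<in>{..<n}. s t = v}) = n" by simp
  moreover have "excess n s (Suc n) = int (\<Sum>v<Suc n. card {t\<in>{..<n}. s t = v}) - int (Suc n)"
    unfolding excess_def by (simp add: sum_subtractf cong: sum.cong_simp del: sum.lessThan_Suc)
  ultimately have "excess n s (Suc n) = -1" by simp
  have "excess n s (Suc n + i)
      = excess n s (Suc n) + (\<Sum>w<i. int (card {t\<in>{..<n}. s t = (w + Suc n) mod Suc n}) - 1)"
    unfolding excess_def by (rule sum_lessThan_add)
  also have "(\<Sum>w<i. int (card {t\<in>{..<n}. s t = (w + Suc n) mod Suc n}) - 1) = excess n s i"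
    unfolding excess_def by (simp only: mod_add_self2)
  finally show ?thesis using \<open>excess n s (Suc n) = -1\<close> by simp
qed

lemma ex1_cyclic_shift_parking:
  assumes s: "s \<in> {..<n} \<rightarrow>\<^sub>E {..n}"
  shows "\<exists>!r. r \<le> n \<and> cyclic_shift n r s \<in> parking_funs n"
proof -
  from ex1_rotation_minimum[of "Suc n" "excess n s", OF _ excess_periodic[OF s]]
  have "\<exists>!r. r \<le> n \<and> (\<forall>i\<in>{1..n}. excess n s r \<le> excess n s (r + i))"
    by (simp add: less_Suc_eq_le atLeastLessThanSuc_atLeastAtMost)
  moreover have "r \<le> n \<and> cyclic_shift n r s \<in> parking_funs n
      \<longleftrightarrow> r \<le> n \<and> (\<forall>i\<in>{1..n}. excess n s r \<le> excess n s (r + i))" for r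
    using cyclic_shift_parking_iff[OF s, of r] by blast
  ultimately show ?thesis by (simp only:)
qed

theorem card_parking_funs: "card (parking_funs n) = Suc n ^ (n - 1)"
proof -
  define S where "S = {..<n} \<rightarrow>\<^sub>E {..n}"
  define PP where "PP = parking_funs n"
  have "PP \<subseteq> {..<n} \<rightarrow>\<^sub>E {1..n}"
    using parking_fun_on_subset_PiE[of "{..<n}" 0 n] unfolding PP_def by simp
  also have "\<dots> \<subseteq> {..<n} \<rightarrow>\<^sub>E {1..Suc n}"
    by (rule PiE_mono) auto
  finally have "{g \<in> {..<n} \<rightarrow>\<^sub>E {1..Suc n}. g \<in> PP} = PP"
    unfolding Int_def[symmetric] by (rule Int_absorb1)
  then have shift_count: "card {s\<in>S. cyclic_shift n r s \<in> PP} = card PP" if "r \<le> n" for r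
    using card_filter_bij_betw[OF bij_betw_cyclic_shift[OF that], of _ "\<lambda>g. g \<in> PP"]
    unfolding S_def by simp
  have one_shift: "card {r\<in>{..n}. cyclic_shift n r s \<in> PP} = 1" if "s \<in> S" for s
  proof -
    from ex1_cyclic_shift_parking[of s n] that obtain r where "r \<le> n \<and> cyclic_shift n r s \<in> PP"
      and "\<And>r'. r' \<le> n \<and> cyclic_shift n r' s \<in> PP \<Longrightarrow> r' = r"
      unfolding S_def PP_def by blast
    then have "{r\<in>{..n}. cyclic_shift n r s \<in> PP} = {r}" by blast
    then show ?thesis by simp
  qed
  have "Suc n ^ n = (\<Sum>s\<in>S. 1)"
    by (simp add: S_def card_PiE)
  also have "\<dots> = (\<Sum>s\<in>S. card {r\<in>{..n}. cyclic_shift n r s \<in> PP})"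
    by (intro sum.cong refl one_shift[symmetric])
  also have "\<dots> = (\<Sum>r\<in>{..n}. card {s\<in>S. cyclic_shift n r s \<in> PP})"
    by (rule sum_card_filter_swap) (simp_all add: S_def finite_PiE)
  also have "\<dots> = Suc n * card PP"
    by (simp add: shift_count)
  finally have "Suc n * Suc n ^ (n - 1) = Suc n * card PP"
    by (cases n) simp_all
  then have "Suc n ^ (n - 1) = card PP"
    using mult_cancel1[of "Suc n"] by (metis Zero_neq_Suc)
  then show ?thesis unfolding PP_def by simp
qed

corollary card_parking_fun_on:
  assumes "finite I"
  shows "card (parking_fun_on I off (card I)) = Suc (card I) ^ (card I - 1)"
proof -
  obtain \<sigma> where "bij_betw \<sigma> {..<card I} I"
    using ex_bij_betw_nat_finite[OF assms] by (auto simp: atLeast0LessThan)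
  then show ?thesis
    by (simp add: card_parking_fun_on_reindex card_parking_fun_on_shift[of "{..<card I}"]
        card_parking_funs)
qed

section \<open>Splitting parking functions\<close>

lemma parking_fun_on_split_iff:
  assumes "finite J" and g: "g \<in> J \<rightarrow>\<^sub>E {off+1..off+(a+b)}" and card_T: "card {t\<in>J. g t \<le> off + a} = a"
  defines "T \<equiv> {t\<in>J. g t \<le> off + a}"
  shows "g \<in> parking_fun_on J off (a + b) \<longleftrightarrow>
         restrict g T \<in> parking_fun_on T off a \<and> restrict g (J - T) \<in> parking_fun_on (J - T) (off + a) b"
proof -
  have low: "{t\<in>J. g t \<le> off + i} = {t\<in>T. g t \<le> off + i}" if "i \<le> a" for i
    using that by (auto simp: T_def)
  have high: "card {t\<in>J. g t \<le> off + (a + i)} = a + card {t\<in>J - T. g t \<le> off + a + i}" for i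
  proof -
    have "{t\<in>J. g t \<le> off + (a + i)} = T \<union> {t\<in>J - T. g t \<le> off + a + i}"
      by (auto simp: T_def)
    moreover have "card (T \<union> {t\<in>J - T. g t \<le> off + a + i}) = card T + card {t\<in>J - T. g t \<le> off + a + i}"
      by (rule card_Un_disjoint) (use \<open>finite J\<close> in \<open>auto simp: T_def\<close>)
    ultimately show ?thesis using card_T by (simp add: T_def)
  qed
  have counts: "(\<forall>i\<in>{1..a + b}. i \<le> card {t\<in>J. g t \<le> off + i}) \<longleftrightarrow>
      (\<forall>i\<in>{1..a}. i \<le> card {t\<in>T. g t \<le> off + i}) \<and>
      (\<forall>i\<in>{1..b}. i \<le> card {t\<in>J - T. g t \<le> off + a + i})"
    unfolding ball_atLeastAtMost_add_iff using low high by simp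
  have "\<forall>t\<in>T. g t \<in> {off+1..off+a}" "\<forall>t\<in>J - T. g t \<in> {off+a+1..off+a+b}"
    using PiE_mem[OF g] by (auto simp: T_def add.assoc)
  with g counts show ?thesis
    unfolding restrict_in_parking_fun_on_iff by (simp add: parking_fun_on_def add.assoc)
qed

lemma threshold_merge:
  fixes c :: "'b::linorder"
  assumes A: "\<forall>v\<in>A. v \<le> c" and B: "\<forall>v\<in>B. c < v"
    and "T \<subseteq> J" and x: "x \<in> T \<rightarrow>\<^sub>E A" and y: "y \<in> J - T \<rightarrow>\<^sub>E B"
  defines "h \<equiv> \<lambda>t. if t \<in> T then x t else y t"
  shows "h \<in> J \<rightarrow>\<^sub>E A \<union> B" and "{t\<in>J. h t \<le> c} = T"
    and "restrict h T = x" and "restrict h (J - T) = y"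
proof -
  show "h \<in> J \<rightarrow>\<^sub>E A \<union> B"
  proof (rule PiE_I)
    show "h t \<in> A \<union> B" if "t \<in> J" for t
      using PiE_mem[OF x, of t] PiE_mem[OF y, of t] that unfolding h_def by auto
    show "h t = undefined" if "t \<notin> J" for t
      using PiE_arb[OF y, of t] that \<open>T \<subseteq> J\<close> unfolding h_def by auto
  qed
  show "{t\<in>J. h t \<le> c} = T"
    using PiE_mem[OF x] PiE_mem[OF y] A B \<open>T \<subseteq> J\<close> unfolding h_def
    by (force simp: not_le[symmetric])
  show "restrict h T = x"
    using PiE_arb[OF x] by (auto simp: h_def)
  show "restrict h (J - T) = y"
    using PiE_arb[OF y] by (auto simp: h_def)
qed

lemma bij_betw_split_threshold:
  fixes c :: "'b::linorder"
  assumes A: "\<forall>v\<in>A. v \<le> c" and B: "\<forall>v\<in>B. c < v"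
  shows "bij_betw (\<lambda>g. ({t\<in>J. g t \<le> c}, restrict g {t\<in>J. g t \<le> c}, restrict g (J - {t\<in>J. g t \<le> c})))
           (J \<rightarrow>\<^sub>E A \<union> B) (SIGMA T:Pow J. (T \<rightarrow>\<^sub>E A) \<times> (J - T \<rightarrow>\<^sub>E B))"
proof (rule bij_betwI[where g = "\<lambda>(T, x, y) t. if t \<in> T then x t else y t"])
  show "(\<lambda>g. ({t\<in>J. g t \<le> c}, restrict g {t\<in>J. g t \<le> c}, restrict g (J - {t\<in>J. g t \<le> c})))
        \<in> (J \<rightarrow>\<^sub>E A \<union> B) \<rightarrow> (SIGMA T:Pow J. (T \<rightarrow>\<^sub>E A) \<times> (J - T \<rightarrow>\<^sub>E B))"
  proof
    fix g assume g: "g \<in> J \<rightarrow>\<^sub>E A \<union> B"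
    have "g t \<in> A" if "t \<in> J" "g t \<le> c" for t
      using PiE_mem[OF g \<open>t \<in> J\<close>] B that(2) by (auto simp: not_less[symmetric])
    moreover have "g t \<in> B" if "t \<in> J" "\<not> g t \<le> c" for t
      using PiE_mem[OF g \<open>t \<in> J\<close>] A that(2) by auto
    ultimately show "({t\<in>J. g t \<le> c}, restrict g {t\<in>J. g t \<le> c}, restrict g (J - {t\<in>J. g t \<le> c}))
        \<in> (SIGMA T:Pow J. (T \<rightarrow>\<^sub>E A) \<times> (J - T \<rightarrow>\<^sub>E B))"
      by (simp add: restrict_PiE_iff)
  qed
  show "(\<lambda>(T, x, y) t. if t \<in> T then x t else y t)
          \<in> (SIGMA T:Pow J. (T \<rightarrow>\<^sub>E A) \<times> (J - T \<rightarrow>\<^sub>E B)) \<rightarrow> (J \<rightarrow>\<^sub>E A \<union> B)"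
  proof
    fix z assume "z \<in> (SIGMA T:Pow J. (T \<rightarrow>\<^sub>E A) \<times> (J - T \<rightarrow>\<^sub>E B))"
    then obtain T x y where "z = (T, x, y)" "T \<subseteq> J" "x \<in> T \<rightarrow>\<^sub>E A" "y \<in> J - T \<rightarrow>\<^sub>E B"
      by blast
    then show "(\<lambda>(T, x, y) t. if t \<in> T then x t else y t) z \<in> J \<rightarrow>\<^sub>E A \<union> B"
      using threshold_merge(1)[OF A B] by simp
  qed
  show "(\<lambda>(T, x, y) t. if t \<in> T then x t else y t)
          ({t\<in>J. g t \<le> c}, restrict g {t\<in>J. g t \<le> c}, restrict g (J - {t\<in>J. g t \<le> c})) = g"
    if g: "g \<in> J \<rightarrow>\<^sub>E A \<union> B" for g
    using PiE_arb[OF g] by (auto simp: fun_eq_iff)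
  show "(\<lambda>h. ({t\<in>J. h t \<le> c}, restrict h {t\<in>J. h t \<le> c}, restrict h (J - {t\<in>J. h t \<le> c})))
          ((\<lambda>(T, x, y) t. if t \<in> T then x t else y t) z) = z"
    if z: "z \<in> (SIGMA T:Pow J. (T \<rightarrow>\<^sub>E A) \<times> (J - T \<rightarrow>\<^sub>E B))" for z
  proof -
    obtain T x y where "z = (T, x, y)" "T \<subseteq> J" "x \<in> T \<rightarrow>\<^sub>E A" "y \<in> J - T \<rightarrow>\<^sub>E B"
      using z by blast
    with threshold_merge(2-4)[OF A B this(2-4)] show ?thesis by simp
  qed
qed

lemma parking_fun_on_remove_max_iff:
  assumes "finite T" "c \<in> T" and x: "x \<in> T \<rightarrow>\<^sub>E {off+1..off+card T}" and xc: "x c = off + card T"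
  shows "x \<in> parking_fun_on T off (card T) \<longleftrightarrow>
         restrict x (T - {c}) \<in> parking_fun_on (T - {c}) off (card T - 1)"
proof -
  define m where "m = card T"
  have "1 \<le> m" using assms(1,2) unfolding m_def by (auto simp: Suc_le_eq card_gt_0_iff)
  have same: "{t\<in>T. x t \<le> off + i} = {t\<in>T - {c}. x t \<le> off + i}" if "i < m" for i
    using xc that unfolding m_def by auto
  have top: "card {t\<in>T. x t \<le> off + m} = m"
    using PiE_mem[OF x] unfolding m_def by (intro arg_cong[where f = card]) auto
  have "(\<forall>i\<in>{1..m}. i \<le> card {t\<in>T. x t \<le> off + i}) \<longleftrightarrow>
        (\<forall>i\<in>{1..m - 1}. i \<le> card {t\<in>T. x t \<le> off + i})"
    using ball_atLeastAtMost_add_iff[of "m - 1" 1 "\<lambda>i. i \<le> card {t\<in>T. x t \<le> off + i}"] top \<open>1 \<le> m\<close>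
    by simp
  also have "\<dots> \<longleftrightarrow> (\<forall>i\<in>{1..m - 1}. i \<le> card {t\<in>T - {c}. x t \<le> off + i})"
    using same \<open>1 \<le> m\<close> by (intro ball_cong) auto
  finally have counts: "(\<forall>i\<in>{1..m}. i \<le> card {t\<in>T. x t \<le> off + i}) \<longleftrightarrow>
                     (\<forall>i\<in>{1..m - 1}. i \<le> card {t\<in>T - {c}. x t \<le> off + i})" .
  have ranges: "\<forall>t\<in>T - {c}. x t \<in> {off+1..off+(m - 1)}"
    if H: "\<forall>i\<in>{1..m - 1}. i \<le> card {t\<in>T - {c}. x t \<le> off + i}"
  proof (cases "m = 1")
    case False
    then have "card (T - {c}) \<le> card {t\<in>T - {c}. x t \<le> off + (m - 1)}"
      using H[rule_format, of "m - 1"] \<open>1 \<le> m\<close> assms(1,2) unfolding m_def by simp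
    then have "\<forall>t\<in>T - {c}. x t \<le> off + (m - 1)"
      using assms(1) by (intro ball_of_card_filter_ge) auto
    then show ?thesis using PiE_mem[OF x] by auto
  next
    case True
    then have "T = {c}"
      using assms(2) unfolding m_def by (metis card_1_singletonE singletonD)
    then show ?thesis by simp
  qed
  show ?thesis
    using x counts ranges unfolding restrict_in_parking_fun_on_iff m_def[symmetric]
    by (auto simp: parking_fun_on_def)
qed

lemma card_parking_fun_on_fixed_max:
  assumes "finite T" "c \<in> T"
  shows "card {x \<in> parking_fun_on T off (card T). x c = off + card T} = card T ^ (card T - 2)"
proof -
  define m where "m = card T"
  define T' where "T' = T - {c}"
  have T': "finite T'" "card T' = m - 1" "insert c T' = T" "c \<notin> T'" "1 \<le> m"
    using assms unfolding m_def T'_def by (auto simp: Suc_le_eq card_gt_0_iff)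
  have "{x \<in> parking_fun_on T off m. x c = off + m}
      = {x \<in> {x \<in> insert c T' \<rightarrow>\<^sub>E {off+1..off+m}. x c = off + m}. x \<in> parking_fun_on T off m}"
    using parking_fun_on_subset_PiE[of T off m] T'(3) by auto
  moreover have "{y \<in> T' \<rightarrow>\<^sub>E {off+1..off+m}. y \<in> parking_fun_on T' off (m - 1)} = parking_fun_on T' off (m - 1)"
  proof -
    have "T' \<rightarrow>\<^sub>E {off+1..off+(m - 1)} \<subseteq> T' \<rightarrow>\<^sub>E {off+1..off+m}"
      by (rule PiE_mono) auto
    with parking_fun_on_subset_PiE[of T' off "m - 1"]
    have "parking_fun_on T' off (m - 1) \<subseteq> T' \<rightarrow>\<^sub>E {off+1..off+m}" by (rule order_trans)
    then show ?thesis unfolding Int_def[symmetric] by (rule Int_absorb1)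
  qed
  moreover have "card {x \<in> {x \<in> insert c T' \<rightarrow>\<^sub>E {off+1..off+m}. x c = off + m}. x \<in> parking_fun_on T off m}
      = card {y \<in> T' \<rightarrow>\<^sub>E {off+1..off+m}. y \<in> parking_fun_on T' off (m - 1)}"
    using parking_fun_on_remove_max_iff[OF assms] T'(3,5)
    by (intro card_filter_bij_betw[OF bij_betw_restrict_fun_upd[OF T'(4)]]) (simp_all add: m_def T'_def)
  ultimately have "card {x \<in> parking_fun_on T off m. x c = off + m} = card (parking_fun_on T' off (m - 1))"
    by simp
  also have "\<dots> = Suc (m - 1) ^ (m - 1 - 1)"
    using card_parking_fun_on[OF T'(1), of off] T'(2) by simp
  also have "\<dots> = m ^ (m - 2)"
    using T'(5) by (simp add: numeral_2_eq_2)
  finally show ?thesis unfolding m_def .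
qed

section \<open>The first entry of a parking function\<close>

lemma card_le_fun_upd:
  assumes "finite A" "x \<in> A"
  shows "card {t\<in>A. (g(x := c)) t \<le> i} + (if g x \<le> i then 1 else 0)
         = card {t\<in>A. g t \<le> i} + (if c \<le> i then 1 else 0)"
proof -
  have "{t\<in>A - {x}. (g(x := c)) t \<le> i} = {t\<in>A - {x}. g t \<le> i}" by auto
  then show ?thesis
    using card_filter_remove[OF assms, of "\<lambda>t. (g(x := c)) t \<le> i"]
      card_filter_remove[OF assms, of "\<lambda>t. g t \<le> i"] by simp
qed

lemma parking_funs_first_decrease:
  assumes g: "g \<in> parking_funs n" and g0: "g 0 = Suc k" and "1 \<le> k" "0 < n"
  defines "g' \<equiv> g(0 := k)"
  shows "g' \<in> parking_funs n" and "card {t\<in>{..<n}. g' t \<le> k} \<noteq> k"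
proof -
  have count: "card {t\<in>{..<n}. g' t \<le> i} + (if Suc k \<le> i then 1 else 0)
               = card {t\<in>{..<n}. g t \<le> i} + (if k \<le> i then 1 else 0)" for i
    using card_le_fun_upd[of "{..<n}" 0 g k i] g0 \<open>0 < n\<close> unfolding g'_def by simp
  have parks: "i \<le> card {t\<in>{..<n}. g t \<le> i}" if "i \<in> {1..n}" for i
    using g that by (simp add: parking_fun_on_def)
  have g_PiE: "g \<in> {..<n} \<rightarrow>\<^sub>E {1..n}"
    using g parking_fun_on_subset_PiE[of "{..<n}" 0 n] by auto
  then have "Suc k \<le> n"
    using PiE_mem[OF g_PiE, of 0] g0 \<open>0 < n\<close> by simp
  then have "g' \<in> {..<n} \<rightarrow>\<^sub>E {1..n}"
    using PiE_fun_upd[of k "\<lambda>_. {1..n}" 0 g "{..<n}"] g_PiE \<open>1 \<le> k\<close> \<open>0 < n\<close>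
    unfolding g'_def by (simp add: insert_absorb)
  moreover have "i \<le> card {t\<in>{..<n}. g' t \<le> i}" if "i \<in> {1..n}" for i
    using count[of i] parks[OF that] by (simp split: if_splits)
  ultimately show "g' \<in> parking_funs n"
    by (simp add: parking_fun_on_def)
  show "card {t\<in>{..<n}. g' t \<le> k} \<noteq> k"
    using count[of k] parks[of k] \<open>1 \<le> k\<close> \<open>Suc k \<le> n\<close> by simp
qed

lemma parking_funs_first_increase:
  assumes g: "g \<in> parking_funs n" and g0: "g 0 = k" and not_break: "card {t\<in>{..<n}. g t \<le> k} \<noteq> k"
    and "1 \<le> k" "0 < n"
  defines "g' \<equiv> g(0 := Suc k)"
  shows "g' \<in> parking_funs n"
proof -
  have count: "card {t\<in>{..<n}. g' t \<le> i} + (if k \<le> i then 1 else 0)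
               = card {t\<in>{..<n}. g t \<le> i} + (if Suc k \<le> i then 1 else 0)" for i
    using card_le_fun_upd[of "{..<n}" 0 g "Suc k" i] g0 \<open>0 < n\<close> unfolding g'_def by simp
  have parks: "i \<le> card {t\<in>{..<n}. g t \<le> i}" if "i \<in> {1..n}" for i
    using g that by (simp add: parking_fun_on_def)
  have g_PiE: "g \<in> {..<n} \<rightarrow>\<^sub>E {1..n}"
    using g parking_fun_on_subset_PiE[of "{..<n}" 0 n] by auto
  then have "k \<le> n"
    using PiE_mem[OF g_PiE, of 0] g0 \<open>0 < n\<close> by simp
  have "card {t\<in>{..<n}. g t \<le> k} \<le> n"
    using card_mono[of "{..<n}" "{t\<in>{..<n}. g t \<le> k}"] by auto
  then have "Suc k \<le> n"
    using parks[of k] \<open>1 \<le> k\<close> \<open>k \<le> n\<close> not_break by simp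
  then have "g' \<in> {..<n} \<rightarrow>\<^sub>E {1..n}"
    using PiE_fun_upd[of "Suc k" "\<lambda>_. {1..n}" 0 g "{..<n}"] g_PiE \<open>0 < n\<close>
    unfolding g'_def by (simp add: insert_absorb)
  moreover have "i \<le> card {t\<in>{..<n}. g' t \<le> i}" if "i \<in> {1..n}" for i
    using count[of i] parks[OF that] not_break by (cases "i = k") (simp_all split: if_splits)
  ultimately show ?thesis
    by (simp add: parking_fun_on_def)
qed

lemma card_parking_funs_first_Suc:
  assumes "1 \<le> k" "0 < n"
  shows "card {g \<in> parking_funs n. g 0 = k}
         = card {g \<in> parking_funs n. g 0 = Suc k}
           + card {g \<in> parking_funs n. g 0 = k \<and> card {t\<in>{..<n}. g t \<le> k} = k}"
proof -
  define C where "C = (\<lambda>g. card {t\<in>{..<n}. g t \<le> k})"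
  have fin: "finite {g \<in> parking_funs n. P g}" for P
    by (simp add: finite_parking_fun_on)
  have "bij_betw (\<lambda>g. g(0 := k)) {g \<in> parking_funs n. g 0 = Suc k}
          {g \<in> parking_funs n. g 0 = k \<and> C g \<noteq> k}"
  proof (rule bij_betwI[where g = "\<lambda>g. g(0 := Suc k)"])
    show "(\<lambda>g. g(0 := k)) \<in> {g \<in> parking_funs n. g 0 = Suc k} \<rightarrow> {g \<in> parking_funs n. g 0 = k \<and> C g \<noteq> k}"
      using parking_funs_first_decrease[OF _ _ assms] unfolding C_def by auto
    show "(\<lambda>g. g(0 := Suc k)) \<in> {g \<in> parking_funs n. g 0 = k \<and> C g \<noteq> k} \<rightarrow> {g \<in> parking_funs n. g 0 = Suc k}"
      using parking_funs_first_increase[OF _ _ _ assms] unfolding C_def by auto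
  qed auto
  then have "card {g \<in> parking_funs n. g 0 = Suc k} = card {g \<in> parking_funs n. g 0 = k \<and> C g \<noteq> k}"
    by (rule bij_betw_same_card)
  moreover have "{g \<in> parking_funs n. g 0 = k}
      = {g \<in> parking_funs n. g 0 = k \<and> C g = k} \<union> {g \<in> parking_funs n. g 0 = k \<and> C g \<noteq> k}"
    by blast
  ultimately show ?thesis
    using card_Un_disjoint[OF fin fin] unfolding C_def by (simp add: disjoint_iff)
qed

lemma card_parking_funs_first_eq_sum:
  assumes "1 \<le> k" "k \<le> Suc n" "0 < n"
  shows "card {g \<in> parking_funs n. g 0 = k}
         = (\<Sum>k'=k..n. card {g \<in> parking_funs n. g 0 = k' \<and> card {t\<in>{..<n}. g t \<le> k'} = k'})"
  using assms(1,2)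
proof (induction "Suc n - k" arbitrary: k)
  case 0
  then have "k = Suc n" by simp
  have "g 0 \<le> n" if "g \<in> parking_funs n" for g
    using PiE_mem[OF subsetD[OF parking_fun_on_subset_PiE that], of 0] \<open>0 < n\<close> by simp
  then have "{g \<in> parking_funs n. g 0 = k} = {}"
    using \<open>k = Suc n\<close> by force
  then have "card {g \<in> parking_funs n. g 0 = k} = 0"
    by (simp only: card.empty)
  then show ?case using \<open>k = Suc n\<close> by simp
next
  case (Suc d)
  then have "k \<le> n" by simp
  then show ?case
    using card_parking_funs_first_Suc[OF \<open>1 \<le> k\<close> \<open>0 < n\<close>] Suc
    by (simp add: sum.atLeast_Suc_atMost)
qed

lemma parking_funs_first_breakpoint_iff:
  assumes g: "g \<in> {..<n} \<rightarrow>\<^sub>E {1..n}" and "k \<le> n" "0 < n"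
  defines "T \<equiv> {t\<in>{..<n}. g t \<le> k}"
  shows "g \<in> parking_funs n \<and> g 0 = k \<and> card T = k \<longleftrightarrow>
         card T = k \<and> 0 \<in> T \<and> restrict g T 0 = k \<and> restrict g T \<in> parking_fun_on T 0 k \<and>
         restrict g ({..<n} - T) \<in> parking_fun_on ({..<n} - T) k (n - k)"
proof (cases "card T = k")
  case True
  have "g \<in> {..<n} \<rightarrow>\<^sub>E {0+1..0+(k + (n - k))}" using g \<open>k \<le> n\<close> by simp
  from parking_fun_on_split_iff[OF _ this] True \<open>k \<le> n\<close>
  have "g \<in> parking_funs n \<longleftrightarrow> restrict g T \<in> parking_fun_on T 0 k \<and>
          restrict g ({..<n} - T) \<in> parking_fun_on ({..<n} - T) k (n - k)"
    unfolding T_def by simp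
  moreover have "g 0 = k \<longleftrightarrow> 0 \<in> T \<and> restrict g T 0 = k"
    using \<open>0 < n\<close> unfolding T_def by auto
  ultimately show ?thesis using True by blast
qed simp

lemma card_breakpoint_pieces:
  assumes "1 \<le> k" "k \<le> n"
  shows "card (SIGMA T:{T. T \<subseteq> {..<n} \<and> 0 \<in> T \<and> card T = k}.
                {x \<in> parking_fun_on T 0 k. x 0 = k} \<times> parking_fun_on ({..<n} - T) k (n - k))
         = (n - 1 choose (k - 1)) * (k ^ (k - 2) * Suc (n - k) ^ (n - k - 1))"
proof -
  define \<T> where "\<T> = {T. T \<subseteq> {..<n} \<and> 0 \<in> T \<and> card T = k}"
  have "finite \<T>" unfolding \<T>_def by simp
  have fin: "finite T" "finite ({..<n} - T)" if "T \<in> \<T>" for T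
    using that unfolding \<T>_def by (auto intro: finite_subset)
  have pieces: "card ({x \<in> parking_fun_on T 0 k. x 0 = k} \<times> parking_fun_on ({..<n} - T) k (n - k))
      = k ^ (k - 2) * Suc (n - k) ^ (n - k - 1)" if "T \<in> \<T>" for T
  proof -
    have "card ({..<n} - T) = n - k" using that fin(1)[OF that] unfolding \<T>_def by (simp add: card_Diff_subset)
    then show ?thesis
      using card_parking_fun_on_fixed_max[OF fin(1)[OF that], of 0 0] card_parking_fun_on[OF fin(2)[OF that], of k]
        that unfolding \<T>_def by (simp add: card_cartesian_product)
  qed
  have "card (SIGMA T:\<T>. {x \<in> parking_fun_on T 0 k. x 0 = k} \<times> parking_fun_on ({..<n} - T) k (n - k))
      = (\<Sum>T\<in>\<T>. card ({x \<in> parking_fun_on T 0 k. x 0 = k} \<times> parking_fun_on ({..<n} - T) k (n - k)))"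
    using \<open>finite \<T>\<close> fin by (intro card_SigmaI) (auto simp: finite_parking_fun_on)
  also have "\<dots> = card \<T> * (k ^ (k - 2) * Suc (n - k) ^ (n - k - 1))"
    using pieces by simp
  also have "card \<T> = n - 1 choose (k - 1)"
    using card_subsets_containing[of "{..<n}" 0 "k - 1"] assms unfolding \<T>_def by simp
  finally show ?thesis unfolding \<T>_def .
qed

lemma card_parking_funs_first_breakpoint:
  assumes "1 \<le> k" "k \<le> n"
  shows "card {g \<in> parking_funs n. g 0 = k \<and> card {t\<in>{..<n}. g t \<le> k} = k}
         = (n - 1 choose (k - 1)) * (k ^ (k - 2) * Suc (n - k) ^ (n - k - 1))"
proof -
  define J where "J = {..<n}"
  define Y where "Y = (SIGMA T:Pow J. (T \<rightarrow>\<^sub>E {1..k}) \<times> (J - T \<rightarrow>\<^sub>E {Suc k..n}))"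
  define Q where "Q = (\<lambda>(T, x, y). card T = k \<and> 0 \<in> T \<and> x 0 = k \<and> x \<in> parking_fun_on T 0 k \<and>
                                    y \<in> parking_fun_on (J - T) k (n - k))"
  have "{1..k} \<union> {Suc k..n} = {1..n}" using assms by auto
  then have split_bij: "bij_betw (\<lambda>g. ({t\<in>J. g t \<le> k}, restrict g {t\<in>J. g t \<le> k}, restrict g (J - {t\<in>J. g t \<le> k})))
                      (J \<rightarrow>\<^sub>E {1..n}) Y"
    using bij_betw_split_threshold[of "{1..k}" k "{Suc k..n}" J] unfolding Y_def by simp
  have "parking_funs n \<subseteq> J \<rightarrow>\<^sub>E {1..n}"
    using parking_fun_on_subset_PiE[of "{..<n}" 0 n] unfolding J_def by simp
  then have "{g \<in> parking_funs n. g 0 = k \<and> card {t\<in>{..<n}. g t \<le> k} = k}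
      = {g \<in> J \<rightarrow>\<^sub>E {1..n}. g \<in> parking_funs n \<and> g 0 = k \<and> card {t\<in>J. g t \<le> k} = k}"
    unfolding J_def by blast
  also have "card \<dots> = card {z \<in> Y. Q z}"
  proof (rule card_filter_bij_betw[OF split_bij])
    fix g assume "g \<in> J \<rightarrow>\<^sub>E {1..n}"
    from parking_funs_first_breakpoint_iff[OF this[unfolded J_def] assms(2)] assms
    show "g \<in> parking_funs n \<and> g 0 = k \<and> card {t\<in>J. g t \<le> k} = k \<longleftrightarrow>
        Q ({t\<in>J. g t \<le> k}, restrict g {t\<in>J. g t \<le> k}, restrict g (J - {t\<in>J. g t \<le> k}))"
      unfolding Q_def J_def prod.case by linarith
  qed
  also have "{z \<in> Y. Q z} = (SIGMA T:{T. T \<subseteq> J \<and> 0 \<in> T \<and> card T = k}.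
                {x \<in> parking_fun_on T 0 k. x 0 = k} \<times> parking_fun_on (J - T) k (n - k))"
  proof -
    have "parking_fun_on T 0 k \<subseteq> T \<rightarrow>\<^sub>E {1..k}" "parking_fun_on (J - T) k (n - k) \<subseteq> J - T \<rightarrow>\<^sub>E {Suc k..n}" for T
      using parking_fun_on_subset_PiE[of T 0 k] parking_fun_on_subset_PiE[of "J - T" k "n - k"] assms by simp_all
    then show ?thesis unfolding Y_def Q_def by blast
  qed
  finally show ?thesis
    using card_breakpoint_pieces[OF assms] unfolding J_def by simp
qed

lemma bij_betw_PF_parking_funs: "bij_betw (\<lambda>p. restrict (nth p) {..<n}) (PF n) (parking_funs n)"
proof (rule bij_betwI[where g = "\<lambda>g. map g [0..<n]"])
  show "(\<lambda>p. restrict (nth p) {..<n}) \<in> PF n \<rightarrow> parking_funs n"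
  proof
    fix p assume "p \<in> PF n"
    then show "restrict (nth p) {..<n} \<in> parking_funs n"
      unfolding restrict_in_parking_fun_on_iff by (auto simp: PF_def)
  qed
  show "(\<lambda>g. map g [0..<n]) \<in> parking_funs n \<rightarrow> PF n"
  proof
    fix g assume g: "g \<in> parking_funs n"
    have "{t. t < n \<and> map g [0..<n] ! t \<le> i} = {t\<in>{..<n}. g t \<le> 0 + i}" for i by auto
    then show "map g [0..<n] \<in> PF n" using g by (auto simp: PF_def parking_fun_on_def PiE_def Pi_def)
  qed
  show "map (restrict (nth p) {..<n}) [0..<n] = p" if "p \<in> PF n" for p
    using that by (auto simp: PF_def intro!: nth_equalityI)
  show "restrict (nth (map g [0..<n])) {..<n} = g" if "g \<in> parking_funs n" for g
    using that by (auto simp: parking_fun_on_def PiE_def extensional_def)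
qed

lemma card_PF: "card (PF n) = Suc n ^ (n - 1)"
  using bij_betw_same_card[OF bij_betw_PF_parking_funs] card_parking_funs by simp

lemma card_PF_first:
  assumes "j < n"
  shows "card {p \<in> PF n. p ! 0 = n - j}
         = (\<Sum>m=1..j+1. (n - 1 choose (m - 1)) * (Suc (n - m) ^ (n - m - 1) * m ^ (m - 2)))"
proof -
  define f where "f k = (n - 1 choose (k - 1)) * (k ^ (k - 2) * Suc (n - k) ^ (n - k - 1))" for k
  have "card {p \<in> PF n. p ! 0 = n - j} = card {g \<in> parking_funs n. g 0 = n - j}"
    using card_filter_bij_betw[OF bij_betw_PF_parking_funs[of n], of _ "\<lambda>g. g 0 = n - j"] assms
    by simp
  also have "\<dots> = (\<Sum>k=n-j..n. card {g \<in> parking_funs n. g 0 = k \<and> card {t\<in>{..<n}. g t \<le> k} = k})"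
    using card_parking_funs_first_eq_sum[of "n - j" n] assms by simp
  also have "\<dots> = (\<Sum>k=n-j..n. f k)"
  proof (rule sum.cong[OF refl])
    fix k assume "k \<in> {n-j..n}"
    then show "card {g \<in> parking_funs n. g 0 = k \<and> card {t\<in>{..<n}. g t \<le> k} = k} = f k"
      unfolding f_def using assms by (intro card_parking_funs_first_breakpoint) auto
  qed
  also have "\<dots> = (\<Sum>m=1..j+1. f (Suc n - m))"
    by (rule sum.reindex_bij_witness[where i = "\<lambda>m. Suc n - m" and j = "\<lambda>k. Suc n - k"])
      (use assms in auto)
  also have "\<dots> = (\<Sum>m=1..j+1. (n - 1 choose (m - 1)) * (Suc (n - m) ^ (n - m - 1) * m ^ (m - 2)))"
  proof (rule sum.cong[OF refl])
    fix m assume "m \<in> {1..j+1}"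
    then obtain a b where ab: "m = Suc a" "n = Suc (a + b)"
      using assms by (intro that[of "m - 1" "n - m"]) auto
    show "f (Suc n - m) = (n - 1 choose (m - 1)) * (Suc (n - m) ^ (n - m - 1) * m ^ (m - 2))"
      unfolding f_def ab using binomial_symmetric[of a "a + b"] by simp
  qed
  finally show ?thesis .
qed

section \<open>Asymptotics\<close>

lemma tendsto_binomial_over_power:
  "((\<lambda>n. real (n - 1 choose k) * fact k / real n ^ k) \<longlongrightarrow> 1) at_top"
proof -
  have "((\<lambda>n. \<Prod>i<k. (real n - 1 - real i) / real n) \<longlongrightarrow> (\<Prod>i<k. 1)) at_top"
    by (intro tendsto_prod) real_asymp
  moreover have "\<forall>\<^sub>F n in at_top. (\<Prod>i<k. (real n - 1 - real i) / real n) = real (n - 1 choose k) * fact k / real n ^ k"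
    using eventually_ge_at_top[of 1]
  proof eventually_elim
    case (elim n)
    have "real (n - 1 choose k) * fact k = (\<Prod>i<k. real (n - 1) - real i)"
      by (simp add: binomial_gbinomial gbinomial_mult_fact' atLeast0LessThan)
    then show ?case using elim by (simp add: prod_dividef of_nat_diff)
  qed
  ultimately show ?thesis by (simp add: tendsto_cong)
qed

lemma tendsto_first_entry_term:
  assumes "1 \<le> m"
  shows "((\<lambda>n. real n * real ((n - 1 choose (m - 1)) * (Suc (n - m) ^ (n - m - 1) * m ^ (m - 2)))
            / real (Suc n ^ (n - 1))) \<longlongrightarrow> borel_pmf m) at_top"
proof -
  define c where "c = real (m ^ (m - 2)) / fact (m - 1)"
  have power_ratio: "((\<lambda>n::nat. real n ^ m * (real n - m + 1) powr (real n - m - 1) / (real n + 1) powr (real n - 1))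
      \<longlongrightarrow> inverse (exp (real m))) at_top"
    by real_asymp
  have "((\<lambda>n. (real (n - 1 choose (m - 1)) * fact (m - 1) / real n ^ (m - 1)) *
         (real n ^ m * (real n - m + 1) powr (real n - m - 1) / (real n + 1) powr (real n - 1)) * c)
         \<longlongrightarrow> 1 * inverse (exp (real m)) * c) at_top"
    by (intro tendsto_mult tendsto_binomial_over_power power_ratio tendsto_const)
  moreover have "1 * inverse (exp (real m)) * c = borel_pmf m"
  proof -
    obtain k where k: "m = Suc k" using assms by (cases m) auto
    have "real (Suc k) ^ k / fact (Suc k) = real (Suc k) ^ (k - 1) / fact k" if "k \<ge> 1"
      using that by (simp add: power_eq_if)
    then show ?thesis unfolding c_def borel_pmf_def k exp_minus by (cases k) simp_all
  qed
  moreover have "\<forall>\<^sub>F n in at_top.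
      (real (n - 1 choose (m - 1)) * fact (m - 1) / real n ^ (m - 1)) *
      (real n ^ m * (real n - m + 1) powr (real n - m - 1) / (real n + 1) powr (real n - 1)) * c
      = real n * real ((n - 1 choose (m - 1)) * (Suc (n - m) ^ (n - m - 1) * m ^ (m - 2))) / real (Suc n ^ (n - 1))"
    using eventually_ge_at_top[of "m + 1"]
  proof eventually_elim
    case (elim n)
    have "(real n - m + 1) powr (real n - m - 1) = real (Suc (n - m) ^ (n - m - 1))"
      using elim by (simp add: powr_realpow[symmetric] of_nat_diff algebra_simps)
    moreover have "(real n + 1) powr (real n - 1) = real (Suc n ^ (n - 1))"
      using elim by (simp add: powr_realpow[symmetric] of_nat_diff algebra_simps)
    moreover have "real n ^ m = real n * real n ^ (m - 1)"
      using assms by (simp add: power_eq_if)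
    ultimately show ?case using elim unfolding c_def by (simp add: field_simps)
  qed
  ultimately show ?thesis by (simp add: tendsto_cong)
qed

lemma tendsto_scaled_prob_first:
  "((\<lambda>n. real n * prob_first n (n - j)) \<longlongrightarrow> borel_cdf (j + 1)) at_top"
proof -
  have "((\<lambda>n. \<Sum>m=1..j+1. real n * real ((n - 1 choose (m - 1)) * (Suc (n - m) ^ (n - m - 1) * m ^ (m - 2)))
            / real (Suc n ^ (n - 1))) \<longlongrightarrow> (\<Sum>m=1..j+1. borel_pmf m)) at_top"
    by (intro tendsto_sum tendsto_first_entry_term) simp
  moreover have "\<forall>\<^sub>F n in at_top.
      (\<Sum>m=1..j+1. real n * real ((n - 1 choose (m - 1)) * (Suc (n - m) ^ (n - m - 1) * m ^ (m - 2)))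
         / real (Suc n ^ (n - 1))) = real n * prob_first n (n - j)"
    using eventually_gt_at_top[of j]
  proof eventually_elim
    case (elim n)
    have "real n * prob_first n (n - j) = real n * real (\<Sum>m=1..j+1. (n - 1 choose (m - 1)) *
        (Suc (n - m) ^ (n - m - 1) * m ^ (m - 2))) / real (Suc n ^ (n - 1))"
      unfolding prob_first_def card_PF_first[OF elim] card_PF by simp
    then show ?case by (simp only: of_nat_sum sum_distrib_left sum_divide_distrib)
  qed
  ultimately show ?thesis
    unfolding borel_cdf_def by (simp add: tendsto_cong)
qed

lemma borel_cdf_pos: "0 < borel_cdf (Suc j)"
proof -
  have "borel_cdf (Suc j) = borel_pmf 1 + (\<Sum>m=Suc 1..Suc j. borel_pmf m)"
    unfolding borel_cdf_def by (rule sum.atLeast_Suc_atMost) simp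
  moreover have "0 \<le> (\<Sum>m=Suc 1..Suc j. borel_pmf m)"
    by (intro sum_nonneg) (simp add: borel_pmf_def)
  moreover have "0 < borel_pmf 1"
    by (simp add: borel_pmf_def)
  ultimately show ?thesis by linarith
qed

lemma prob_first_asymp_equiv:
  "(\<lambda>n. prob_first n (n - j)) \<sim>[at_top] (\<lambda>n. borel_cdf (j + 1) / real n)"
proof (rule asymp_equivI')
  have "((\<lambda>n. real n * prob_first n (n - j) / borel_cdf (j + 1)) \<longlongrightarrow> 1) at_top"
    using tendsto_divide[OF tendsto_scaled_prob_first[of j] tendsto_const, of "borel_cdf (j + 1)"]
      borel_cdf_pos[of j] by simp
  moreover have "\<forall>\<^sub>F n in at_top. real n * prob_first n (n - j) / borel_cdf (j + 1)
                   = prob_first n (n - j) / (borel_cdf (j + 1) / real n)"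
    using eventually_gt_at_top[of 0] by eventually_elim simp
  ultimately show "((\<lambda>n. prob_first n (n - j) / (borel_cdf (j + 1) / real n)) \<longlongrightarrow> 1) at_top"
    by (rule Lim_transform_eventually)
qed

theorem corollary2:
  shows "(\<forall>j::nat. (\<lambda>n. prob_first n (n - j)) \<sim>[at_top] (\<lambda>n. borel_cdf (j + 1) / real n))
         \<and> ((\<lambda>n. prob_first n n) \<sim>[at_top] (\<lambda>n. 1 / (exp 1 * real n)))"
proof -
  have "borel_cdf (0 + 1) / real n = 1 / (exp 1 * real n)" for n
    by (simp add: borel_cdf_def borel_pmf_def exp_minus field_simps)
  then show ?thesis
    using prob_first_asymp_equiv[of 0] prob_first_asymp_equiv by simp
qed

end
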